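(* Let $p$ be a prime and let $G$ be a $2$-tuple regular finite group of exponent $p^s$ for some $s\in\mathbb{N}$. For all $i,j\in\{1,\ldots,s\}$, the subgroup $[\Omega_i(G),\Omega_j(G)]$ is a union of order classes of $G$.
   Context: $\Omega_i(G)$ is the subgroup generated by all elements of order dividing $p^i$; $[A,B]=\langle aba^{-1}b^{-1}: a\in A,b\in B\rangle$. A subgroup $N$ of $G$ is a union of order classes if for every $n\in\mathbb{N}$ it contains either all or none of the elements of order $n$ of $G$. A finite group $G$ is $2$-tuple regular if for all pairs $(g_1,g_2),(h_1,h_2)\in G^2$ (entries may coincide) for which $g_1\mapsto h_1,g_2\mapsto h_2$ defines an isomorphism $\langle g_1,g_2\rangle\to\langle h_1,h_2\rangle$, there is a bijection $\Psi\colon G\to G$ such that for every $g\in G$ the assignment $g_1\mapsto h_1,g_2\mapsto h_2,g\mapsto\Psi(g)$ defines an isomorphism $\langle g_1,g_2,g\rangle\to\langle h_1,h_2,\Psi(g)\rangle$. *)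

theory Defs
  imports "HOL-Algebra.Algebra"
begin

definition group_exponent :: "('a, 'b) monoid_scheme \<Rightarrow> nat" where
  "group_exponent G = Lcm (group.ord G ` carrier G)"

definition Omega :: "('a, 'b) monoid_scheme \<Rightarrow> nat \<Rightarrow> nat \<Rightarrow> 'a set" where
  "Omega G p i = generate G {x \<in> carrier G. group.ord G x dvd p ^ i}"

definition comm_subgroup :: "('a, 'b) monoid_scheme \<Rightarrow> 'a set \<Rightarrow> 'a set \<Rightarrow> 'a set" where
  "comm_subgroup G A B =
     generate G {a \<otimes>\<^bsub>G\<^esub> b \<otimes>\<^bsub>G\<^esub> inv\<^bsub>G\<^esub> a \<otimes>\<^bsub>G\<^esub> inv\<^bsub>G\<^esub> b | a b. a \<in> A \<and> b \<in> B}"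

definition union_of_order_classes :: "('a, 'b) monoid_scheme \<Rightarrow> 'a set \<Rightarrow> bool" where
  "union_of_order_classes G N \<longleftrightarrow>
     (\<forall>n::nat. (\<forall>x\<in>carrier G. group.ord G x = n \<longrightarrow> x \<in> N) \<or>
               (\<forall>x\<in>carrier G. group.ord G x = n \<longrightarrow> x \<notin> N))"

definition defines_iso :: "('a, 'b) monoid_scheme \<Rightarrow> 'a list \<Rightarrow> 'a list \<Rightarrow> bool" where
  "defines_iso G gs hs \<longleftrightarrow>
     (\<exists>\<phi> \<in> iso (subgroup_generated G (set gs)) (subgroup_generated G (set hs)).
        list_all2 (\<lambda>g h. \<phi> g = h) gs hs)"

definition two_tuple_regular :: "('a, 'b) monoid_scheme \<Rightarrow> bool" where
  "two_tuple_regular G \<longleftrightarrow>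
     (\<forall>g1\<in>carrier G. \<forall>g2\<in>carrier G. \<forall>h1\<in>carrier G. \<forall>h2\<in>carrier G.
        defines_iso G [g1, g2] [h1, h2] \<longrightarrow>
        (\<exists>\<Psi>. bij_betw \<Psi> (carrier G) (carrier G) \<and>
             (\<forall>g\<in>carrier G. defines_iso G [g1, g2, g] [h1, h2, \<Psi> g])))"

end

theory Submission
  imports Defs
begin

text \<open>Two elements \<open>x, y\<close> of equal order generate isomorphic cyclic groups, so 1-tuple regularity (2-tuple
  regularity applied to \<open>(x, x) \<mapsto> (y, y)\<close>)
  extends \<open>x \<mapsto> y\<close> to an isomorphism \<open>\<langle>x, g\<rangle> \<cong> \<langle>y, g'\<rangle>\<close>, and 2-tuple regularity extends it
  once more to \<open>\<langle>x, a, b\<rangle> \<cong> \<langle>y, a', b'\<rangle>\<close>. If \<open>x = [a, b]\<close> with \<open>a, b\<close> in unions of order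
  classes \<open>A, B\<close>, then \<open>y = [a', b']\<close> with \<open>a'\<close> of the order of \<open>a\<close> and \<open>b'\<close> of the order
  of \<open>b\<close>, so the set of commutators is a union of order classes. The subgroup generated
  by a union of order classes \<open>S\<close> is again one: if \<open>y\<close> has the order of a product
  \<open>h\<^sub>1 h\<^sub>2\<close>, extend \<open>(h\<^sub>1 h\<^sub>2, h\<^sub>1) \<mapsto> (y, g')\<close>; then \<open>g'\<close> and \<open>g'\<inverse> y\<close> have the orders
  of \<open>h\<^sub>1\<close> and \<open>h\<^sub>2\<close>, and induction over the generation of \<open>\<langle>S\<rangle>\<close> applies.\<close>

definition one_tuple_regular :: "('a, 'b) monoid_scheme \<Rightarrow> bool" where
  "one_tuple_regular G \<longleftrightarrow>
     (\<forall>g1\<in>carrier G. \<forall>h1\<in>carrier G.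
        defines_iso G [g1] [h1] \<longrightarrow>
        (\<exists>\<Psi>. bij_betw \<Psi> (carrier G) (carrier G) \<and>
             (\<forall>g\<in>carrier G. defines_iso G [g1, g] [h1, \<Psi> g])))"

lemma iso_ord_eq:
  assumes "group H" "group K" "\<phi> \<in> iso H K" "g \<in> carrier H"
  shows "group.ord K (\<phi> g) = group.ord H g"
proof -
  interpret group_hom H K \<phi>
    using assms by (simp add: group_hom_def group_hom_axioms_def iso_def)
  have inj: "inj_on \<phi> (carrier H)" using assms(3) by (simp add: iso_def bij_betw_def)
  have "\<phi> g [^]\<^bsub>K\<^esub> n = \<one>\<^bsub>K\<^esub> \<longleftrightarrow> g [^]\<^bsub>H\<^esub> n = \<one>\<^bsub>H\<^esub>" for n :: nat
    using assms(4) hom_nat_pow[of g n] hom_one inj_on_eq_iff[OF inj]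
    by (metis G.nat_pow_closed G.one_closed)
  then show ?thesis
    using assms(4) group.ord_unique[OF assms(2)] group.pow_eq_id[OF assms(1)] by simp
qed

context group
begin

lemma ord_subgroup_generated: "group.ord (subgroup_generated G S) x = ord x"
  by (simp add: ord_def group.ord_def[OF group_subgroup_generated] pow_subgroup_generated)

lemma iso_subgroup_generated_ord:
  assumes "\<phi> \<in> iso (subgroup_generated G A) (subgroup_generated G B)"
    and "a \<in> carrier (subgroup_generated G A)"
  shows "ord (\<phi> a) = ord a"
  using iso_ord_eq[OF group_subgroup_generated group_subgroup_generated assms]
  by (simp add: ord_subgroup_generated)

lemma hom_subgroup_generated_mult:
  assumes "\<phi> \<in> hom (subgroup_generated G A) (subgroup_generated G B)"
    and "a \<in> carrier (subgroup_generated G A)" "b \<in> carrier (subgroup_generated G A)"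
  shows "\<phi> (a \<otimes> b) = \<phi> a \<otimes> \<phi> b"
  using hom_mult[OF assms] by simp

lemma hom_subgroup_generated_inv:
  assumes "\<phi> \<in> hom (subgroup_generated G A) (subgroup_generated G B)"
    and "a \<in> carrier (subgroup_generated G A)"
  shows "\<phi> (inv a) = inv (\<phi> a)"
proof -
  interpret group_hom "subgroup_generated G A" "subgroup_generated G B" \<phi>
    using assms(1) by (simp add: group_hom_def group_hom_axioms_def)
  show ?thesis
    using hom_inv[OF assms(2)] assms(2) by (simp add: subgroup_generated_subset_carrier_subset)
qed

lemma defines_iso_singleton_iff:
  assumes x: "x \<in> carrier G" and y: "y \<in> carrier G"
  shows "defines_iso G [x] [y] \<longleftrightarrow> ord x = ord y"
proof
  assume "defines_iso G [x] [y]"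
  then obtain \<phi> where "\<phi> \<in> iso (subgroup_generated G {x}) (subgroup_generated G {y})" "\<phi> x = y"
    by (auto simp: defines_iso_def)
  moreover have "x \<in> carrier (subgroup_generated G {x})"
    using x by (simp add: carrier_subgroup_generated generate.incl)
  ultimately show "ord x = ord y"
    using iso_subgroup_generated_ord by metis
next
  assume o: "ord x = ord y"
  define \<phi> where "\<phi> g = y [^] (SOME n::int. g = x [^] n)" for g
  have same_kernel: "x [^] (a::int) = x [^] (b::int) \<longleftrightarrow> y [^] a = y [^] b" for a b
    using int_pow_eq[OF x, of a b] int_pow_eq[OF y, of a b] o by simp
  have \<phi>_pow: "\<phi> (x [^] (n::int)) = y [^] n" for n
  proof -
    have "x [^] n = x [^] (SOME m::int. x [^] n = x [^] m)" by (rule someI) (rule refl)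
    then show ?thesis unfolding \<phi>_def using same_kernel by metis
  qed
  have cx: "carrier (subgroup_generated G {x}) = range (\<lambda>n::int. x [^] n)"
    and cy: "carrier (subgroup_generated G {y}) = range (\<lambda>n::int. y [^] n)"
    using carrier_subgroup_generated_by_singleton x y by auto
  have "\<phi> \<in> hom (subgroup_generated G {x}) (subgroup_generated G {y})"
    by (rule homI) (auto simp: cx cy \<phi>_pow int_pow_mult[OF x, symmetric] int_pow_mult[OF y, symmetric])
  moreover have "bij_betw \<phi> (carrier (subgroup_generated G {x})) (carrier (subgroup_generated G {y}))"
    unfolding bij_betw_def cx cy inj_on_def using \<phi>_pow same_kernel by (auto simp: image_iff)
  moreover have "\<phi> x = y" using \<phi>_pow[of 1] x y by simp
  ultimately show "defines_iso G [x] [y]" by (auto simp: defines_iso_def iso_def)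
qed

lemma union_of_order_classes_iff:
  assumes "N \<subseteq> carrier G"
  shows "union_of_order_classes G N \<longleftrightarrow> (\<forall>x\<in>N. \<forall>y\<in>carrier G. ord y = ord x \<longrightarrow> y \<in> N)"
  unfolding union_of_order_classes_def
proof (intro iffI ballI impI allI)
  fix x y assume "\<forall>n. (\<forall>x\<in>carrier G. ord x = n \<longrightarrow> x \<in> N) \<or> (\<forall>x\<in>carrier G. ord x = n \<longrightarrow> x \<notin> N)"
    and "x \<in> N" "y \<in> carrier G" "ord y = ord x"
  with assms show "y \<in> N" by (metis subsetD)
next
  fix n assume "\<forall>x\<in>N. \<forall>y\<in>carrier G. ord y = ord x \<longrightarrow> y \<in> N"
  then show "(\<forall>x\<in>carrier G. ord x = n \<longrightarrow> x \<in> N) \<or> (\<forall>x\<in>carrier G. ord x = n \<longrightarrow> x \<notin> N)"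
    by metis
qed

lemma two_tuple_regular_imp_one_tuple_regular:
  assumes "two_tuple_regular G"
  shows "one_tuple_regular G"
  unfolding one_tuple_regular_def
proof (intro ballI impI)
  fix x y assume x: "x \<in> carrier G" and y: "y \<in> carrier G" and "defines_iso G [x] [y]"
  then have "defines_iso G [x, x] [y, y]" by (simp add: defines_iso_def)
  then obtain \<Psi> where "bij_betw \<Psi> (carrier G) (carrier G)"
    and "\<forall>g\<in>carrier G. defines_iso G [x, x, g] [y, y, \<Psi> g]"
    using assms x y unfolding two_tuple_regular_def by blast
  then show "\<exists>\<Psi>. bij_betw \<Psi> (carrier G) (carrier G) \<and> (\<forall>g\<in>carrier G. defines_iso G [x, g] [y, \<Psi> g])"
    by (auto simp: defines_iso_def)
qed

lemma one_tuple_regular_extend: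
  assumes "one_tuple_regular G" "x \<in> carrier G" "y \<in> carrier G" "ord x = ord y" "g \<in> carrier G"
  obtains g' \<phi> where "g' \<in> carrier G"
    and "\<phi> \<in> iso (subgroup_generated G {x, g}) (subgroup_generated G {y, g'})"
    and "\<phi> x = y" "\<phi> g = g'"
proof -
  have "defines_iso G [x] [y]" using defines_iso_singleton_iff assms(2-4) by simp
  then obtain \<Psi> where bij: "bij_betw \<Psi> (carrier G) (carrier G)"
    and ext: "\<forall>g\<in>carrier G. defines_iso G [x, g] [y, \<Psi> g]"
    using assms(1)[unfolded one_tuple_regular_def, rule_format, OF assms(2,3)] by blast
  from ext assms(5) obtain \<phi>
    where "\<phi> \<in> iso (subgroup_generated G {x, g}) (subgroup_generated G {y, \<Psi> g})" "\<phi> x = y" "\<phi> g = \<Psi> g"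
    by (auto simp: defines_iso_def)
  moreover have "\<Psi> g \<in> carrier G" using bij assms(5) by (rule bij_betw_apply)
  ultimately show ?thesis using that by blast
qed

lemma two_tuple_regular_extend:
  assumes "two_tuple_regular G" "x \<in> carrier G" "y \<in> carrier G" "a \<in> carrier G" "a' \<in> carrier G"
    and "\<phi> \<in> iso (subgroup_generated G {x, a}) (subgroup_generated G {y, a'})" "\<phi> x = y" "\<phi> a = a'"
    and "b \<in> carrier G"
  obtains b' \<psi> where "b' \<in> carrier G"
    and "\<psi> \<in> iso (subgroup_generated G {x, a, b}) (subgroup_generated G {y, a', b'})"
    and "\<psi> x = y" "\<psi> a = a'" "\<psi> b = b'"
proof -
  have "defines_iso G [x, a] [y, a']" using assms(6-8) by (auto simp: defines_iso_def)
  then obtain \<Psi> where bij: "bij_betw \<Psi> (carrier G) (carrier G)"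
    and ext: "\<forall>g\<in>carrier G. defines_iso G [x, a, g] [y, a', \<Psi> g]"
    using assms(1)[unfolded two_tuple_regular_def, rule_format, OF assms(2,4,3,5)] by blast
  from ext assms(9) obtain \<psi>
    where "\<psi> \<in> iso (subgroup_generated G {x, a, b}) (subgroup_generated G {y, a', \<Psi> b})"
      "\<psi> x = y" "\<psi> a = a'" "\<psi> b = \<Psi> b"
    by (auto simp: defines_iso_def)
  moreover have "\<Psi> b \<in> carrier G" using bij assms(9) by (rule bij_betw_apply)
  ultimately show ?thesis using that by blast
qed

lemma one_tuple_regular_ord_mult:
  assumes reg: "one_tuple_regular G" and h1: "h1 \<in> carrier G" and h2: "h2 \<in> carrier G"
    and y: "y \<in> carrier G" and ord_y: "ord y = ord (h1 \<otimes> h2)"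
  obtains g1 g2 where "g1 \<in> carrier G" "g2 \<in> carrier G" "y = g1 \<otimes> g2"
    and "ord g1 = ord h1" "ord g2 = ord h2"
proof -
  let ?H = "subgroup_generated G {h1 \<otimes> h2, h1}"
  have x: "h1 \<otimes> h2 \<in> carrier G" using h1 h2 by simp
  obtain g1 \<phi> where g1: "g1 \<in> carrier G"
    and \<phi>: "\<phi> \<in> iso ?H (subgroup_generated G {y, g1})" and \<phi>_x: "\<phi> (h1 \<otimes> h2) = y" and \<phi>_h1: "\<phi> h1 = g1"
    by (rule one_tuple_regular_extend[OF reg x y ord_y[symmetric] h1])
  have hom: "\<phi> \<in> hom ?H (subgroup_generated G {y, g1})" using \<phi> by (simp add: iso_def)
  have x_H: "h1 \<otimes> h2 \<in> carrier ?H" and h1_H: "h1 \<in> carrier ?H"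
    using x h1 by (simp_all add: carrier_subgroup_generated generate.incl)
  have inv_h1_H: "inv h1 \<in> carrier ?H"
    using subgroup.m_inv_closed[OF subgroup_subgroup_generated h1_H] .
  have h2_word: "h2 = inv h1 \<otimes> (h1 \<otimes> h2)" using h1 h2 by (simp add: m_assoc[symmetric])
  then have h2_H: "h2 \<in> carrier ?H"
    using subgroup.m_closed[OF subgroup_subgroup_generated inv_h1_H x_H] by simp
  have "\<phi> h2 = inv g1 \<otimes> y"
    by (subst h2_word) (simp add: hom_subgroup_generated_mult[OF hom inv_h1_H x_H]
        hom_subgroup_generated_inv[OF hom h1_H] \<phi>_x \<phi>_h1)
  then have "ord (inv g1 \<otimes> y) = ord h2" using iso_subgroup_generated_ord[OF \<phi> h2_H] by simp
  moreover have "ord g1 = ord h1" using iso_subgroup_generated_ord[OF \<phi> h1_H] \<phi>_h1 by simp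
  moreover have "y = g1 \<otimes> (inv g1 \<otimes> y)" using g1 y by (simp add: m_assoc[symmetric])
  ultimately show ?thesis using g1 y by (intro that[of g1 "inv g1 \<otimes> y"]) simp_all
qed

lemma two_tuple_regular_ord_commutator:
  assumes reg: "two_tuple_regular G" and a: "a \<in> carrier G" and b: "b \<in> carrier G"
    and y: "y \<in> carrier G" and ord_y: "ord y = ord (a \<otimes> b \<otimes> inv a \<otimes> inv b)"
  obtains a' b' where "a' \<in> carrier G" "b' \<in> carrier G" "y = a' \<otimes> b' \<otimes> inv a' \<otimes> inv b'"
    and "ord a' = ord a" "ord b' = ord b"
proof -
  let ?x = "a \<otimes> b \<otimes> inv a \<otimes> inv b"
  let ?H = "subgroup_generated G {?x, a, b}"
  have x: "?x \<in> carrier G" using a b by simp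
  obtain a' \<phi> where a': "a' \<in> carrier G"
    and \<phi>: "\<phi> \<in> iso (subgroup_generated G {?x, a}) (subgroup_generated G {y, a'})"
    and \<phi>_x: "\<phi> ?x = y" and \<phi>_a: "\<phi> a = a'"
    by (rule one_tuple_regular_extend[OF two_tuple_regular_imp_one_tuple_regular[OF reg] x y ord_y[symmetric] a])
  obtain b' \<psi> where b': "b' \<in> carrier G"
    and \<psi>: "\<psi> \<in> iso ?H (subgroup_generated G {y, a', b'})"
    and \<psi>_x: "\<psi> ?x = y" and \<psi>_a: "\<psi> a = a'" and \<psi>_b: "\<psi> b = b'"
    by (rule two_tuple_regular_extend[OF reg x y a a' \<phi> \<phi>_x \<phi>_a b])
  have hom: "\<psi> \<in> hom ?H (subgroup_generated G {y, a', b'})" using \<psi> by (simp add: iso_def)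
  have a_H: "a \<in> carrier ?H" and b_H: "b \<in> carrier ?H"
    using a b by (simp_all add: carrier_subgroup_generated generate.incl)
  have H: "subgroup (carrier ?H) G" by (rule subgroup_subgroup_generated)
  have inv_H: "inv a \<in> carrier ?H" "inv b \<in> carrier ?H"
    using subgroup.m_inv_closed[OF H] a_H b_H by auto
  have ab_H: "a \<otimes> b \<in> carrier ?H" and aba_H: "a \<otimes> b \<otimes> inv a \<in> carrier ?H"
    using subgroup.m_closed[OF H] a_H b_H inv_H by auto
  have "y = a' \<otimes> b' \<otimes> inv a' \<otimes> inv b'"
    using \<psi>_x \<psi>_a \<psi>_b a_H b_H inv_H ab_H aba_H
    by (simp add: hom_subgroup_generated_mult[OF hom] hom_subgroup_generated_inv[OF hom])
  moreover have "ord a' = ord a" "ord b' = ord b"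
    using iso_subgroup_generated_ord[OF \<psi>] a_H b_H \<psi>_a \<psi>_b by auto
  ultimately show ?thesis using a' b' by (intro that[of a' b']) simp_all
qed

lemma union_of_order_classes_generate:
  assumes reg: "one_tuple_regular G" and S: "S \<subseteq> carrier G"
    and S_classes: "union_of_order_classes G S"
  shows "union_of_order_classes G (generate G S)"
proof -
  have S_closed: "\<And>x y. x \<in> S \<Longrightarrow> y \<in> carrier G \<Longrightarrow> ord y = ord x \<Longrightarrow> y \<in> S"
    using S_classes unfolding union_of_order_classes_iff[OF S] by blast
  have "y \<in> generate G S" if "x \<in> generate G S" "y \<in> carrier G" "ord y = ord x" for x y
    using that
  proof (induction arbitrary: y)
    case one
    then have "y = \<one>" using ord_eq_1[of y] by simp
    then show ?case by (simp add: generate.one)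
  next
    case (incl h)
    then have "y \<in> S" by (rule S_closed)
    then show ?case by (rule generate.incl)
  next
    case (inv h)
    have "ord (inv y) = ord h" using inv S by auto
    then have "inv y \<in> S" by (rule S_closed[OF inv.hyps inv_closed[OF inv.prems(1)]])
    then have "inv (inv y) \<in> generate G S" by (rule generate.inv)
    with inv.prems(1) show ?case by simp
  next
    case (eng h1 h2)
    have h1: "h1 \<in> carrier G" and h2: "h2 \<in> carrier G" using eng.hyps generate_incl[OF S] by auto
    obtain g1 g2 where "g1 \<in> carrier G" "g2 \<in> carrier G" "y = g1 \<otimes> g2"
      and "ord g1 = ord h1" "ord g2 = ord h2"
      by (rule one_tuple_regular_ord_mult[OF reg h1 h2 eng.prems])
    then show ?case using eng.IH by (simp add: generate.eng)
  qed
  then show ?thesis unfolding union_of_order_classes_iff[OF generate_incl[OF S]] by blast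
qed

lemma union_of_order_classes_Omega:
  assumes "one_tuple_regular G"
  shows "union_of_order_classes G (Omega G p i)"
  unfolding Omega_def
  by (rule union_of_order_classes_generate[OF assms]) (auto simp: union_of_order_classes_def)

lemma union_of_order_classes_commutators:
  assumes reg: "two_tuple_regular G" and A: "A \<subseteq> carrier G" "union_of_order_classes G A"
    and B: "B \<subseteq> carrier G" "union_of_order_classes G B"
  shows "union_of_order_classes G {a \<otimes> b \<otimes> inv a \<otimes> inv b | a b. a \<in> A \<and> b \<in> B}"
    (is "union_of_order_classes G ?C")
proof -
  have A_closed: "a' \<in> A" if "a \<in> A" "a' \<in> carrier G" "ord a' = ord a" for a a'
    using A(2) that unfolding union_of_order_classes_iff[OF A(1)] by blast
  have B_closed: "b' \<in> B" if "b \<in> B" "b' \<in> carrier G" "ord b' = ord b" for b b'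
    using B(2) that unfolding union_of_order_classes_iff[OF B(1)] by blast
  have C: "?C \<subseteq> carrier G" using A(1) B(1) by blast
  have "y \<in> ?C" if x_C: "x \<in> ?C" and y: "y \<in> carrier G" and ord_y: "ord y = ord x" for x y
  proof -
    from x_C obtain a b where a: "a \<in> A" and b: "b \<in> B" and x: "x = a \<otimes> b \<otimes> inv a \<otimes> inv b"
      by blast
    have "a \<in> carrier G" "b \<in> carrier G" using a b A(1) B(1) by auto
    then obtain a' b' where "a' \<in> carrier G" "b' \<in> carrier G" "y = a' \<otimes> b' \<otimes> inv a' \<otimes> inv b'"
      and "ord a' = ord a" "ord b' = ord b"
      using ord_y[unfolded x] by (rule two_tuple_regular_ord_commutator[OF reg _ _ y])
    then show ?thesis using A_closed[OF a] B_closed[OF b] by blast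
  qed
  then show ?thesis unfolding union_of_order_classes_iff[OF C] by blast
qed

lemma union_of_order_classes_comm_subgroup:
  assumes "two_tuple_regular G" "A \<subseteq> carrier G" "union_of_order_classes G A"
    and "B \<subseteq> carrier G" "union_of_order_classes G B"
  shows "union_of_order_classes G (comm_subgroup G A B)"
  unfolding comm_subgroup_def
proof (rule union_of_order_classes_generate)
  show "one_tuple_regular G" using assms(1) by (rule two_tuple_regular_imp_one_tuple_regular)
  show "{a \<otimes> b \<otimes> inv a \<otimes> inv b | a b. a \<in> A \<and> b \<in> B} \<subseteq> carrier G" using assms(2,4) by blast
qed (rule union_of_order_classes_commutators[OF assms])

end

theorem lemma4p6:
  fixes G :: "('a, 'b) monoid_scheme" and p s i j :: nat
  assumes "group G" and "finite (carrier G)"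
    and "Factorial_Ring.prime p"
    and "two_tuple_regular G"
    and "group_exponent G = p ^ s"
    and "i \<in> {1..s}" and "j \<in> {1..s}"
  shows "union_of_order_classes G (comm_subgroup G (Omega G p i) (Omega G p j))"
proof -
  interpret group G by fact
  have "one_tuple_regular G" using \<open>two_tuple_regular G\<close> by (rule two_tuple_regular_imp_one_tuple_regular)
  then have "union_of_order_classes G (Omega G p k)" for k by (rule union_of_order_classes_Omega)
  moreover have "Omega G p k \<subseteq> carrier G" for k unfolding Omega_def by (rule generate_incl) blast
  ultimately show ?thesis
    using union_of_order_classes_comm_subgroup[OF \<open>two_tuple_regular G\<close>] by blast
qed

end
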